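(* Let $m,m'\geq 0$ and $i>0$ be integers. Let $h(t)$ be a rational polynomial of degree at most $m+1$ with $h(t)=t^{m+1}h(1/t)$, and $h'(t)$ a rational polynomial of degree at most $m'+1$ with $h'(t)=t^{m'+1}h'(1/t)$. If $g^{(m,i)}(h(t))\geq 0$ and $g^{(m',i)}(h'(t))\geq 0$ componentwise, then $g^{(m+m'+1,i)}(h(t)h'(t))\geq 0$ componentwise.
   Context: For integers $d\geq 0$ and $i>0$, let $q\geq 0$, $1\leq r\leq i$ be the unique integers with $d+1=qi+r$ and define $P_{d,i}(t)=(1+t+\cdots+t^i)^q(1+t+\cdots+t^r)$; also set $P_{-1,i}(t)=1$. Let $B_{d,i}$ be the ordered list $\big(P_{d,i}(t),\ tP_{d-2,i}(t),\ldots,\ t^{\lfloor (d+1)/2\rfloor}P_{d-2\lfloor (d+1)/2\rfloor,i}(t)\big)$, a basis of the $\mathbb{Q}$-vector space of polynomials of degree at most $d+1$ satisfying $h(t)=t^{d+1}h(1/t)$. For such $h$, $g^{(d,i)}(h(t))=(g_0,\ldots,g_{\lfloor (d+1)/2\rfloor})$ is the vector of coefficients with $h(t)=\sum_j g_j t^jP_{d-2j,i}(t)$. *)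

theory Defs
  imports "HOL-Computational_Algebra.Polynomial"
begin

definition geom_poly :: "nat \<Rightarrow> rat poly" where
  "geom_poly n = (\<Sum>k\<le>n. monom 1 k)"

(* P_{d,i}(t) for integer d \<ge> -1 and i > 0: d+1 = q i + r with 1 \<le> r \<le> i;
   P_{-1,i} = 1 *)
definition P_poly :: "int \<Rightarrow> nat \<Rightarrow> rat poly" where
  "P_poly d i = (if d < 0 then 1 else
     (let q = (nat (d + 1) - 1) div i; r = nat (d + 1) - q * i
      in geom_poly i ^ q * geom_poly r))"

definition palindromic :: "nat \<Rightarrow> rat poly \<Rightarrow> bool" where
  "palindromic d h \<longleftrightarrow> (\<forall>t::rat. t \<noteq> 0 \<longrightarrow> poly h t = t ^ (d + 1) * poly h (1 / t))"

definition B_expansion :: "nat \<Rightarrow> nat \<Rightarrow> (nat \<Rightarrow> rat) \<Rightarrow> rat poly" where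
  "B_expansion d i g = (\<Sum>j\<le>(d + 1) div 2. smult (g j) (monom 1 j * P_poly (int d - 2 * int j) i))"

definition g_vec :: "nat \<Rightarrow> nat \<Rightarrow> rat poly \<Rightarrow> nat \<Rightarrow> rat" where
  "g_vec d i h = (THE g. (\<forall>j > (d + 1) div 2. g j = 0) \<and> B_expansion d i g = h)"

end

theory Submission
  imports Defs
begin

(* Write [n] = 1 + t + ... + t^n and, for n >= 0, let b(n) = [i]^(n div i) * [n mod i];
   then P_{n-1,i} = b(n), so g^{(d,i)}(h) is the coefficient vector of h in the family
   t^j b(d+1-2j).  Let C(n) be the cone of all nonnegative combinations of t^j b(n-2j).
   The theorem says C(m+1) * C(m'+1) \<subseteq> C(m+m'+2).  Since t^j t^k b(a) b(b) arises from
   b(a) b(b) by shifting, it suffices to show b(a) * b(b) \<in> C(a+b); this follows from the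
   Clebsch-Gordan identity [r][s] = \<Sum>_{l \<le> min r s} t^l [r+s-2l] for geometric polynomials,
   after absorbing one extra factor [i] when (a mod i) + (b mod i) \<ge> i. *)

text \<open>Polynomials over an integral domain of characteristic 0 that agree outside a single
  point are equal; used to prove polynomial identities by evaluation, avoiding t = 1 or t = 0.\<close>

lemma poly_eq_except_at:
  fixes p q :: "'a::{idom,ring_char_0} poly"
  assumes "\<And>x. x \<noteq> a \<Longrightarrow> poly p x = poly q x"
  shows "p = q"
proof -
  have "\<forall>x. poly ((p - q) * [:-a, 1:]) x = 0"
  proof
    fix x show "poly ((p - q) * [:-a, 1:]) x = 0"
      using assms[of x] by (cases "x = a") auto
  qed
  hence "(p - q) * [:-a, 1:] = 0" using poly_all_0_iff_0 by blast
  moreover have "[:-a, 1:] \<noteq> 0" by simp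
  ultimately show ?thesis by (metis mult_eq_0_iff right_minus_eq)
qed

section \<open>Geometric polynomials\<close>

lemma poly_geom_poly: "poly (geom_poly n) x = (\<Sum>k\<le>n. x ^ k)"
  by (simp add: geom_poly_def poly_sum poly_monom)

lemma geom_poly_times_x_minus_1: "(x - 1) * poly (geom_poly n) x = x ^ Suc n - 1"
  by (induction n) (auto simp: poly_geom_poly algebra_simps)

lemma geom_poly_0 [simp]: "geom_poly 0 = 1"
  by (simp add: geom_poly_def)

lemma coeff_geom_poly: "coeff (geom_poly n) k = (if k \<le> n then 1 else 0)"
  by (simp add: geom_poly_def coeff_sum)

lemma degree_geom_poly: "degree (geom_poly n) \<le> n"
  by (rule degree_le) (simp add: coeff_geom_poly)

text \<open>The recursion behind Clebsch-Gordan: [r+1][s+1] = [r+s+2] + t [r][s].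
  Multiplied by (t-1)^2 both sides equal (t^(r+1)-1)(t^(s+1)-1).\<close>

lemma geom_poly_Suc_mult_Suc:
  "geom_poly (Suc r) * geom_poly (Suc s) = geom_poly (r + s + 2) + monom 1 1 * geom_poly r * geom_poly s"
proof (rule poly_eq_except_at[where a=1])
  fix x :: rat assume x: "x \<noteq> 1"
  let ?u = "\<lambda>n. poly (geom_poly n) x"
  have e: "(x - 1) * ?u n = x ^ Suc n - 1" for n by (rule geom_poly_times_x_minus_1)
  have "(x - 1) * (x - 1) * (?u (Suc r) * ?u (Suc s)) = ((x - 1) * ?u (Suc r)) * ((x - 1) * ?u (Suc s))"
    by (simp add: algebra_simps)
  also have "\<dots> = (x - 1) * ((x - 1) * ?u (r + s + 2)) + x * ((x - 1) * ?u r) * ((x - 1) * ?u s)"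
    unfolding e by (simp add: algebra_simps power_add)
  also have "\<dots> = (x - 1) * (x - 1) * (?u (r + s + 2) + x * ?u r * ?u s)"
    by (simp add: algebra_simps)
  finally have "?u (Suc r) * ?u (Suc s) = ?u (r + s + 2) + x * ?u r * ?u s"
    using x by simp
  thus "poly (geom_poly (Suc r) * geom_poly (Suc s)) x =
        poly (geom_poly (r + s + 2) + monom 1 1 * geom_poly r * geom_poly s) x"
    by (simp add: poly_monom)
qed

lemma geom_poly_mult_le:
  "r \<le> s \<Longrightarrow> geom_poly r * geom_poly s = (\<Sum>l\<le>r. monom 1 l * geom_poly (r + s - 2 * l))"
proof (induction r arbitrary: s)
  case 0 thus ?case by simp
next
  case (Suc r)
  then obtain s' where s: "s = Suc s'" "r \<le> s'" by (cases s) auto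
  have "geom_poly (Suc r) * geom_poly s =
        geom_poly (r + s' + 2) + monom 1 1 * (geom_poly r * geom_poly s')"
    using s geom_poly_Suc_mult_Suc by (simp add: mult.assoc)
  also have "\<dots> = geom_poly (r + s' + 2) + (\<Sum>l\<le>r. monom 1 (Suc l) * geom_poly (r + s' - 2 * l))"
    using Suc.IH[OF s(2)] by (simp add: sum_distrib_left mult_monom mult.assoc[symmetric])
  also have "\<dots> = (\<Sum>l\<le>Suc r. monom 1 l * geom_poly (Suc r + s - 2 * l))"
    unfolding sum.atMost_Suc_shift using s by (auto intro!: sum.cong simp: numeral_2_eq_2)
  finally show ?case .
qed

lemma geom_poly_mult:
  "geom_poly r * geom_poly s = (\<Sum>l\<le>min r s. monom 1 l * geom_poly (r + s - 2 * l))"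
proof (cases "r \<le> s")
  case True thus ?thesis using geom_poly_mult_le[OF True] by (simp add: min_def)
next
  case False
  hence "s \<le> r" by simp
  from geom_poly_mult_le[OF this] show ?thesis using False by (simp add: min_def mult.commute add.commute)
qed

text \<open>If r, s < i \<le> r + s, the terms of Clebsch-Gordan whose degree reaches i recombine
  into [u][i] with u = r + s - i; the remaining terms have degree below i.\<close>

lemma geom_poly_mult_overflow:
  assumes "r < i" "s < i" "i \<le> r + s"
  defines "u \<equiv> r + s - i"
  shows "geom_poly r * geom_poly s =
    geom_poly u * geom_poly i + (\<Sum>l\<in>{u<..min r s}. monom 1 l * geom_poly (r + s - 2 * l))"
proof -
  have u: "u < i" "u \<le> min r s" "u + i = r + s" using assms by linarith+
  have "geom_poly r * geom_poly s = (\<Sum>l\<le>u. monom 1 l * geom_poly (r + s - 2 * l)) +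
      (\<Sum>l\<in>{u<..min r s}. monom 1 l * geom_poly (r + s - 2 * l))"
    unfolding geom_poly_mult ivl_disj_un_one(3)[OF u(2), symmetric]
    by (rule sum.union_disjoint) auto
  also have "(\<Sum>l\<le>u. monom 1 l * geom_poly (r + s - 2 * l)) = geom_poly u * geom_poly i"
    using geom_poly_mult_le[of u i] u by simp
  finally show ?thesis .
qed

section \<open>The basis polynomials\<close>

text \<open>basis_poly i n is P_{n-1,i}: the product [i]^q [w] with n = q i + w and w < i.\<close>

definition basis_poly :: "nat \<Rightarrow> nat \<Rightarrow> rat poly" where
  "basis_poly i n = geom_poly i ^ (n div i) * geom_poly (n mod i)"

lemma basis_poly_eq: "w < i \<Longrightarrow> basis_poly i (q * i + w) = geom_poly i ^ q * geom_poly w"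
  by (simp add: basis_poly_def)

text \<open>The paper's normalisation (remainder r in 1..i) agrees with basis_poly: when i
  divides n the last factor [i] is the last factor of the power [i]^(n div i).\<close>

lemma P_poly_eq_basis_poly:
  assumes "0 < i" shows "P_poly (int n - 1) i = basis_poly i n"
proof (cases "n = 0")
  case True thus ?thesis by (simp add: P_poly_def basis_poly_def)
next
  case False
  define q w where "q = (n - 1) div i" and "w = (n - 1) mod i + 1"
  have n: "n = q * i + w" using False by (simp add: q_def w_def)
  have "P_poly (int n - 1) i = geom_poly i ^ q * geom_poly (n - q * i)"
    using False by (simp add: P_poly_def Let_def q_def)
  also have "n - q * i = w" using n by simp
  finally have P: "P_poly (int n - 1) i = geom_poly i ^ q * geom_poly w" .
  have "w \<le> i" using assms by (simp add: w_def Suc_leI)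
  then consider "w = i" | "w < i" by linarith
  thus ?thesis
  proof cases
    case 1
    hence "n = Suc q * i + 0" using n by simp
    thus ?thesis using P 1 basis_poly_eq[OF assms, of "Suc q"] by (simp add: mult.commute)
  next
    case 2 thus ?thesis using P n basis_poly_eq by metis
  qed
qed

lemma coeff_0_basis_poly: "coeff (basis_poly i n) 0 = 1"
  by (simp add: basis_poly_def coeff_mult_0 coeff_geom_poly coeff_0_power)

lemma degree_basis_poly: "degree (basis_poly i n) \<le> n"
proof -
  have "degree (basis_poly i n) \<le> degree (geom_poly i ^ (n div i)) + degree (geom_poly (n mod i))"
    unfolding basis_poly_def by (rule degree_mult_le)
  also have "\<dots> \<le> n div i * i + n mod i"
    by (intro add_mono order.trans[OF degree_power_le] mult_left_mono degree_geom_poly) (simp add: degree_geom_poly)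
  finally show ?thesis by simp
qed

section \<open>Self-reciprocal polynomials\<close>

definition self_reciprocal :: "nat \<Rightarrow> 'a::field poly \<Rightarrow> bool" where
  "self_reciprocal n p \<longleftrightarrow> (\<forall>x. x \<noteq> 0 \<longrightarrow> poly p x = x ^ n * poly p (1 / x))"

lemma self_reciprocal_mult:
  assumes "self_reciprocal a p" "self_reciprocal b q" shows "self_reciprocal (a + b) (p * q)"
  unfolding self_reciprocal_def
proof (intro allI impI)
  fix x :: 'a assume x: "x \<noteq> 0"
  have "poly p x = x ^ a * poly p (1 / x)" "poly q x = x ^ b * poly q (1 / x)"
    using assms x unfolding self_reciprocal_def by blast+
  thus "poly (p * q) x = x ^ (a + b) * poly (p * q) (1 / x)"
    by (simp add: power_add)
qed

lemma self_reciprocal_power: "self_reciprocal a p \<Longrightarrow> self_reciprocal (k * a) (p ^ k)"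
  by (induction k) (simp_all add: self_reciprocal_mult, simp add: self_reciprocal_def)

lemma self_reciprocal_geom_poly: "self_reciprocal n (geom_poly n)"
  unfolding self_reciprocal_def
proof (intro allI impI)
  fix x :: rat assume x: "x \<noteq> 0"
  have "(\<Sum>k\<le>n. x ^ k) = (\<Sum>k\<le>n. x ^ (n - k))"
    using sum.atLeastAtMost_rev[of "\<lambda>k. x ^ k" 0 n] by (simp add: atLeast0AtMost)
  also have "\<dots> = (\<Sum>k\<le>n. x ^ n * (1 / x) ^ k)"
    by (rule sum.cong) (auto simp: power_diff x power_one_over)
  finally show "poly (geom_poly n) x = x ^ n * poly (geom_poly n) (1 / x)"
    by (simp add: poly_geom_poly sum_distrib_left)
qed

lemma self_reciprocal_basis_poly: "self_reciprocal n (basis_poly i n)"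
proof -
  have "self_reciprocal ((n div i) * i + n mod i) (basis_poly i n)"
    unfolding basis_poly_def
    by (intro self_reciprocal_mult self_reciprocal_power self_reciprocal_geom_poly)
  thus ?thesis by simp
qed

definition coeff_symmetric :: "nat \<Rightarrow> 'a::zero poly \<Rightarrow> bool" where
  "coeff_symmetric n p \<longleftrightarrow> degree p \<le> n \<and> (\<forall>k\<le>n. coeff p k = coeff p (n - k))"

text \<open>A self-reciprocal polynomial of degree at most n has symmetric coefficients:
  t^n p(1/t) is the polynomial with reversed coefficient list.\<close>

lemma self_reciprocal_imp_coeff_symmetric:
  fixes p :: "'a::field_char_0 poly"
  assumes deg: "degree p \<le> n" and rec: "self_reciprocal n p"
  shows "coeff_symmetric n p"
proof -
  define R where "R = (\<Sum>k\<le>n. monom (coeff p (n - k)) k)"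
  have poly_p: "poly p x = (\<Sum>k\<le>n. coeff p k * x ^ k)" for x
    unfolding poly_altdef by (rule sum.mono_neutral_left) (use deg in \<open>auto simp: coeff_eq_0\<close>)
  have "p = R"
  proof (rule poly_eq_except_at[where a=0])
    fix x :: 'a assume x: "x \<noteq> 0"
    have "poly p x = x ^ n * (\<Sum>k\<le>n. coeff p k * (1 / x) ^ k)"
      using rec x poly_p unfolding self_reciprocal_def by metis
    also have "\<dots> = (\<Sum>k\<le>n. coeff p k * x ^ (n - k))"
      by (simp add: sum_distrib_left, rule sum.cong) (auto simp: power_diff x power_one_over)
    also have "\<dots> = (\<Sum>k\<le>n. coeff p (n - k) * x ^ (n - (n - k)))"
      using sum.atLeastAtMost_rev[of "\<lambda>k. coeff p k * x ^ (n - k)" 0 n]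
      by (simp add: atLeast0AtMost)
    also have "\<dots> = poly R x"
      unfolding R_def poly_sum poly_monom by (rule sum.cong) auto
    finally show "poly p x = poly R x" .
  qed
  moreover have "coeff R k = coeff p (n - k)" if "k \<le> n" for k
    unfolding R_def coeff_sum coeff_monom using that by (simp add: if_distrib)
  ultimately show ?thesis using deg unfolding coeff_symmetric_def by metis
qed

lemma coeff_symmetricD:
  assumes "coeff_symmetric n p"
  shows "degree p \<le> n" and "k \<le> n \<Longrightarrow> coeff p k = coeff p (n - k)"
  using assms unfolding coeff_symmetric_def by blast+

lemma coeff_symmetric_basis_poly: "coeff_symmetric n (basis_poly i n)"
  by (rule self_reciprocal_imp_coeff_symmetric[OF degree_basis_poly self_reciprocal_basis_poly])

lemma coeff_symmetric_diff:
  fixes p q :: "'a::ab_group_add poly"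
  assumes p: "coeff_symmetric n p" and q: "coeff_symmetric n q"
  shows "coeff_symmetric n (p - q)"
  unfolding coeff_symmetric_def
proof (intro conjI allI impI)
  show "degree (p - q) \<le> n"
    using coeff_symmetricD(1)[OF p] coeff_symmetricD(1)[OF q] by (rule degree_diff_le)
  fix k assume "k \<le> n"
  hence "coeff p k = coeff p (n - k)" "coeff q k = coeff q (n - k)"
    using coeff_symmetricD(2)[OF p] coeff_symmetricD(2)[OF q] by blast+
  thus "coeff (p - q) k = coeff (p - q) (n - k)" by (simp only: coeff_diff)
qed

lemma coeff_symmetric_smult:
  fixes p :: "'a::comm_semiring_0 poly"
  assumes p: "coeff_symmetric n p" shows "coeff_symmetric n (smult c p)"
  unfolding coeff_symmetric_def
proof (intro conjI allI impI)
  show "degree (smult c p) \<le> n"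
    using p degree_smult_le order.trans unfolding coeff_symmetric_def by blast
  fix k assume "k \<le> n"
  hence "coeff p k = coeff p (n - k)" using p unfolding coeff_symmetric_def by blast
  thus "coeff (smult c p) k = coeff (smult c p) (n - k)" by (simp only: coeff_smult)
qed

text \<open>A symmetric polynomial with vanishing constant term also vanishes in degree n; so it is
  zero if n < 2, and otherwise it is t times a symmetric polynomial for n - 2.\<close>

lemma coeff_symmetric_small:
  assumes sym: "coeff_symmetric n p" and c0: "coeff p 0 = 0" and "n < 2" shows "p = 0"
proof (rule poly_eqI)
  fix k
  have deg: "degree p \<le> n" and "coeff p n = coeff p (n - n)"
    using sym unfolding coeff_symmetric_def by blast+
  hence "coeff p n = 0" using c0 by simp
  consider "k = 0" | "k = n" | "degree p < k" using deg \<open>n < 2\<close> by linarith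
  hence "coeff p k = 0" using c0 \<open>coeff p n = 0\<close> by cases (auto simp: coeff_eq_0)
  thus "coeff p k = coeff 0 k" by simp
qed

lemma coeff_symmetric_pCons_0:
  assumes sym: "coeff_symmetric (Suc (Suc n)) (pCons 0 q)" shows "coeff_symmetric n q"
proof -
  have c: "coeff (pCons 0 q) k = coeff (pCons 0 q) (Suc (Suc n) - k)" if "k \<le> Suc (Suc n)" for k
    using sym that unfolding coeff_symmetric_def by blast
  have top: "coeff q (Suc n) = 0" using c[of 0] by simp
  have deg: "degree q \<le> Suc n" using sym unfolding coeff_symmetric_def by (cases "q = 0") auto
  have "degree q \<le> n"
  proof (rule degree_le, intro allI impI)
    fix k assume "n < k"
    show "coeff q k = 0"
    proof (cases "k = Suc n")
      case False
      hence "degree q < k" using \<open>n < k\<close> deg by simp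
      thus ?thesis by (rule coeff_eq_0)
    qed (use top in simp)
  qed
  moreover have "coeff q k = coeff q (n - k)" if "k \<le> n" for k
    using c[of "Suc k"] that by (simp add: Suc_diff_le)
  ultimately show ?thesis unfolding coeff_symmetric_def by blast
qed

section \<open>Expansion in the basis t^j b(n - 2j)\<close>

text \<open>expansion i n g = \<Sum>_{j \<le> n div 2} g_j t^j b(n - 2j); for n = d + 1 this is the
  paper's expansion in the basis B_{d,i}.\<close>

definition expansion :: "nat \<Rightarrow> nat \<Rightarrow> (nat \<Rightarrow> rat) \<Rightarrow> rat poly" where
  "expansion i n g = (\<Sum>j\<le>n div 2. smult (g j) (monom 1 j * basis_poly i (n - 2 * j)))"

lemma expansion_cong: "(\<And>j. j \<le> n div 2 \<Longrightarrow> g j = g' j) \<Longrightarrow> expansion i n g = expansion i n g'"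
  unfolding expansion_def by (rule sum.cong) auto

lemma expansion_add: "expansion i n g + expansion i n g' = expansion i n (\<lambda>j. g j + g' j)"
  unfolding expansion_def by (simp add: sum.distrib smult_add_left)

lemma expansion_diff: "expansion i n g - expansion i n g' = expansion i n (\<lambda>j. g j - g' j)"
  unfolding expansion_def by (simp add: sum_subtractf smult_diff_left)

lemma expansion_smult: "smult c (expansion i n g) = expansion i n (\<lambda>j. c * g j)"
proof -
  have "smult c (expansion i n g) = [:c:] * expansion i n g" by simp
  also have "\<dots> = expansion i n (\<lambda>j. c * g j)"
    unfolding expansion_def sum_distrib_left by (rule sum.cong) (simp_all add: mult.commute)
  finally show ?thesis .
qed

lemma expansion_small: "n < 2 \<Longrightarrow> expansion i n g = smult (g 0) (basis_poly i n)"
  by (simp add: expansion_def)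

lemma expansion_Suc_Suc:
  "expansion i (Suc (Suc n)) g =
     smult (g 0) (basis_poly i (Suc (Suc n))) + pCons 0 (expansion i n (\<lambda>j. g (Suc j)))"
proof -
  have "expansion i (Suc (Suc n)) g = smult (g 0) (basis_poly i (Suc (Suc n))) +
     (\<Sum>j\<le>n div 2. smult (g (Suc j)) (monom 1 (Suc j) * basis_poly i (Suc (Suc n) - 2 * Suc j)))"
    unfolding expansion_def by (simp only: div2_Suc_Suc sum.atMost_Suc_shift) simp
  also have "(\<Sum>j\<le>n div 2. smult (g (Suc j)) (monom 1 (Suc j) * basis_poly i (Suc (Suc n) - 2 * Suc j)))
     = monom 1 1 * expansion i n (\<lambda>j. g (Suc j))"
    unfolding expansion_def sum_distrib_left
    by (rule sum.cong) (simp_all add: mult_monom mult.assoc[symmetric])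
  finally show ?thesis by (simp add: monom_Suc)
qed

lemma coeff_0_expansion: "coeff (expansion i n g) 0 = g 0"
proof -
  have "coeff (expansion i n g) 0 = (\<Sum>j\<le>n div 2. if j = 0 then g j else 0)"
    unfolding expansion_def coeff_sum
    by (rule sum.cong) (simp_all add: coeff_mult_0 coeff_monom coeff_0_basis_poly)
  thus ?thesis by (simp add: sum.delta)
qed

text \<open>Uniqueness of the expansion: the basis t^j b(n - 2j) is linearly independent, because
  the constant term isolates g_0 and the rest is divisible by t.\<close>

lemma expansion_eq_0:
  "expansion i n g = 0 \<Longrightarrow> j \<le> n div 2 \<Longrightarrow> g j = 0"
proof (induction n arbitrary: g j rule: less_induct)
  case (less n)
  have g0: "g 0 = 0" using coeff_0_expansion[of i n g] less.prems(1) by simp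
  show ?case
  proof (cases "n < 2")
    case True thus ?thesis using g0 less.prems(2) by simp
  next
    case False
    then obtain n' where n: "n = Suc (Suc n')" by (metis add_2_eq_Suc le_add_diff_inverse not_less)
    have "expansion i n' (\<lambda>j. g (Suc j)) = 0"
      using less.prems(1) g0 unfolding n expansion_Suc_Suc by simp
    hence "g (Suc k) = 0" if "k \<le> n' div 2" for k using less.IH[of n'] n that by simp
    thus ?thesis using g0 less.prems(2) n by (cases j) auto
  qed
qed

lemma expansion_inj:
  "expansion i n g = expansion i n g' \<Longrightarrow> j \<le> n div 2 \<Longrightarrow> g j = g' j"
  using expansion_eq_0[of i n "\<lambda>j. g j - g' j" j] by (simp add: expansion_diff[symmetric])

text \<open>Existence of the expansion for every polynomial with symmetric coefficients: subtract
  coeff h 0 times b(n), and expand the quotient by t, a symmetric polynomial for n - 2.\<close>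

lemma expansion_exists:
  "coeff_symmetric n h \<Longrightarrow> \<exists>g. h = expansion i n g"
proof (induction n arbitrary: h rule: less_induct)
  case (less n)
  define c where "c = coeff h 0"
  define h1 where "h1 = h - smult c (basis_poly i n)"
  have sym1: "coeff_symmetric n h1" unfolding h1_def
    by (intro coeff_symmetric_diff coeff_symmetric_smult less.prems coeff_symmetric_basis_poly)
  have c0: "coeff h1 0 = 0" by (simp add: h1_def c_def coeff_0_basis_poly)
  have h: "h = smult c (basis_poly i n) + h1" by (simp add: h1_def)
  show ?case
  proof (cases "n < 2")
    case True
    hence "h = expansion i n (\<lambda>_. c)"
      using coeff_symmetric_small[OF sym1 c0] h expansion_small by simp
    thus ?thesis by blast
  next
    case False
    then obtain n' where n: "n = Suc (Suc n')" by (metis add_2_eq_Suc le_add_diff_inverse not_less)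
    obtain a q where "h1 = pCons a q" by (cases h1)
    with c0 have q: "h1 = pCons 0 q" by simp
    have "coeff_symmetric n' q" using sym1 coeff_symmetric_pCons_0 unfolding q n by blast
    have "n' < n" using n by simp
    then obtain g where "q = expansion i n' g" using less.IH \<open>coeff_symmetric n' q\<close> by blast
    hence "h = expansion i n (case_nat c g)" unfolding h q n expansion_Suc_Suc by simp
    thus ?thesis by blast
  qed
qed

section \<open>The cone of nonnegative expansions\<close>

definition pos_cone :: "nat \<Rightarrow> nat \<Rightarrow> rat poly set" where
  "pos_cone i n = {expansion i n g | g. \<forall>j. 0 \<le> g j}"

lemma pos_coneI: "(\<And>j. 0 \<le> g j) \<Longrightarrow> expansion i n g \<in> pos_cone i n"
  unfolding pos_cone_def by blast

lemma pos_coneE: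
  assumes "p \<in> pos_cone i n" obtains g where "\<And>j. 0 \<le> g j" "p = expansion i n g"
  using assms unfolding pos_cone_def by blast

lemma pos_cone_0: "0 \<in> pos_cone i n"
  using pos_coneI[of "\<lambda>_. 0" i n] by (simp add: expansion_def)

lemma pos_cone_add:
  assumes "p \<in> pos_cone i n" "q \<in> pos_cone i n" shows "p + q \<in> pos_cone i n"
proof -
  obtain g g' where "\<And>j. 0 \<le> g j" "\<And>j. 0 \<le> g' j" "p = expansion i n g" "q = expansion i n g'"
    using assms by (metis pos_coneE)
  thus ?thesis using pos_coneI[of "\<lambda>j. g j + g' j" i n] by (simp add: expansion_add)
qed

lemma pos_cone_smult:
  assumes "0 \<le> c" "p \<in> pos_cone i n" shows "smult c p \<in> pos_cone i n"
proof -
  obtain g where "\<And>j. 0 \<le> g j" "p = expansion i n g" using assms(2) by (meson pos_coneE)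
  thus ?thesis using assms(1) pos_coneI[of "\<lambda>j. c * g j" i n] by (simp add: expansion_smult)
qed

lemma pos_cone_sum: "(\<And>x. x \<in> A \<Longrightarrow> f x \<in> pos_cone i n) \<Longrightarrow> sum f A \<in> pos_cone i n"
  by (induction A rule: infinite_finite_induct) (simp_all add: pos_cone_0 pos_cone_add)

lemma basis_in_pos_cone:
  assumes "2 * l \<le> n" shows "monom 1 l * basis_poly i (n - 2 * l) \<in> pos_cone i n"
proof -
  define g where "g = (\<lambda>j. if j = l then (1::rat) else 0)"
  have "expansion i n g = (\<Sum>j\<le>n div 2. if j = l then monom 1 j * basis_poly i (n - 2 * j) else 0)"
    unfolding expansion_def g_def by (rule sum.cong) auto
  also have "\<dots> = monom 1 l * basis_poly i (n - 2 * l)" using assms by (simp add: sum.delta)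
  finally show ?thesis using pos_coneI[of g i n] by (simp add: g_def)
qed

lemma pos_cone_shift:
  assumes "p \<in> pos_cone i n" shows "monom 1 s * p \<in> pos_cone i (n + 2 * s)"
proof -
  obtain g where g: "\<And>j. 0 \<le> g j" "p = expansion i n g" using assms by (meson pos_coneE)
  have "monom 1 s * p =
      (\<Sum>j\<le>n div 2. smult (g j) (monom 1 (s + j) * basis_poly i (n + 2 * s - 2 * (s + j))))"
    unfolding g expansion_def sum_distrib_left
    by (rule sum.cong) (simp_all add: mult_monom mult.assoc[symmetric])
  also have "\<dots> \<in> pos_cone i (n + 2 * s)"
    using g(1) by (intro pos_cone_sum pos_cone_smult basis_in_pos_cone) auto
  finally show ?thesis .
qed

text \<open>With a = q i + r, b = q' i + s,
  Clebsch-Gordan expands [r][s]; every term t^l [r+s-2l] with r+s-2l < i combines with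
  [i]^(q+q') to t^l b(a+b-2l), and if r + s \<ge> i the remaining terms give b(a+b).\<close>

lemma basis_poly_mult_in_pos_cone:
  assumes i: "0 < i" shows "basis_poly i a * basis_poly i b \<in> pos_cone i (a + b)"
proof -
  define q r s where "q = a div i + b div i" and "r = a mod i" and "s = b mod i"
  have r: "r < i" and s: "s < i" using i by (simp_all add: r_def s_def)
  have ab: "a + b = q * i + (r + s)"
    unfolding q_def r_def s_def using div_mult_mod_eq[of a i] div_mult_mod_eq[of b i]
    by (simp add: algebra_simps)
  have prod: "basis_poly i a * basis_poly i b = geom_poly i ^ q * (geom_poly r * geom_poly s)"
    by (simp add: basis_poly_def q_def r_def s_def power_add mult_ac)
  have low_terms: "(\<Sum>l\<in>L. geom_poly i ^ q * (monom 1 l * geom_poly (r + s - 2 * l))) \<in> pos_cone i (a + b)"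
    if "\<And>l. l \<in> L \<Longrightarrow> 2 * l \<le> r + s \<and> r + s - 2 * l < i" for L
  proof (rule pos_cone_sum)
    fix l assume "l \<in> L"
    hence l: "2 * l \<le> r + s" "r + s - 2 * l < i" using that by auto
    hence "a + b - 2 * l = q * i + (r + s - 2 * l)" using ab by simp
    hence "geom_poly i ^ q * (monom 1 l * geom_poly (r + s - 2 * l)) = monom 1 l * basis_poly i (a + b - 2 * l)"
      using basis_poly_eq[OF l(2), of q] by (simp add: mult_ac)
    also have "\<dots> \<in> pos_cone i (a + b)" using l ab by (intro basis_in_pos_cone) simp
    finally show "geom_poly i ^ q * (monom 1 l * geom_poly (r + s - 2 * l)) \<in> pos_cone i (a + b)" .
  qed
  show ?thesis
  proof (cases "r + s < i")
    case True
    have "basis_poly i a * basis_poly i b =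
        (\<Sum>l\<le>min r s. geom_poly i ^ q * (monom 1 l * geom_poly (r + s - 2 * l)))"
      unfolding prod geom_poly_mult sum_distrib_left ..
    also have "\<dots> \<in> pos_cone i (a + b)" using True by (intro low_terms) auto
    finally show ?thesis .
  next
    case False
    hence overflow: "i \<le> r + s" by simp
    define u where "u = r + s - i"
    have u: "u < i" "a + b = Suc q * i + u" using False r s ab unfolding u_def by auto
    have top: "geom_poly i ^ q * (geom_poly u * geom_poly i) = basis_poly i (a + b)"
      unfolding u(2) basis_poly_eq[OF u(1)] by (simp add: mult_ac)
    have "basis_poly i a * basis_poly i b = geom_poly i ^ q * (geom_poly u * geom_poly i) +
        (\<Sum>l\<in>{u<..min r s}. geom_poly i ^ q * (monom 1 l * geom_poly (r + s - 2 * l)))"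
      unfolding prod geom_poly_mult_overflow[OF r s overflow] u_def
      by (simp add: sum_distrib_left distrib_left)
    also have "\<dots> = basis_poly i (a + b) +
        (\<Sum>l\<in>{u<..min r s}. geom_poly i ^ q * (monom 1 l * geom_poly (r + s - 2 * l)))"
      unfolding top ..
    also have "\<dots> \<in> pos_cone i (a + b)"
    proof (rule pos_cone_add)
      show "basis_poly i (a + b) \<in> pos_cone i (a + b)"
        using basis_in_pos_cone[of 0 "a + b" i] by simp
      show "(\<Sum>l\<in>{u<..min r s}. geom_poly i ^ q * (monom 1 l * geom_poly (r + s - 2 * l)))
          \<in> pos_cone i (a + b)"
        by (intro low_terms) (auto simp: u_def)
    qed
    finally show ?thesis .
  qed
qed

lemma pos_cone_mult:
  assumes i: "0 < i" and p: "p \<in> pos_cone i n" and q: "q \<in> pos_cone i n'"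
  shows "p * q \<in> pos_cone i (n + n')"
proof -
  obtain g where g: "\<And>j. 0 \<le> g j" "p = expansion i n g" using p by (meson pos_coneE)
  obtain g' where g': "\<And>j. 0 \<le> g' j" "q = expansion i n' g'" using q by (meson pos_coneE)
  have monom_add: "monom (1::rat) (j + k) = monom 1 j * monom 1 k" for j k by (simp add: mult_monom)
  have "p * q = (\<Sum>j\<le>n div 2. \<Sum>k\<le>n' div 2. smult (g j * g' k)
      (monom 1 (j + k) * (basis_poly i (n - 2 * j) * basis_poly i (n' - 2 * k))))"
    unfolding g(2) g'(2) expansion_def sum_product
    by (intro sum.cong refl) (simp add: monom_add mult_ac)
  also have "\<dots> \<in> pos_cone i (n + n')"
  proof (intro pos_cone_sum pos_cone_smult)
    fix j k assume "j \<in> {..n div 2}" "k \<in> {..n' div 2}"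
    hence e: "n - 2 * j + (n' - 2 * k) + 2 * (j + k) = n + n'" by auto
    have "basis_poly i (n - 2 * j) * basis_poly i (n' - 2 * k) \<in> pos_cone i (n - 2 * j + (n' - 2 * k))"
      by (rule basis_poly_mult_in_pos_cone[OF i])
    from pos_cone_shift[OF this, of "j + k"]
    show "monom 1 (j + k) * (basis_poly i (n - 2 * j) * basis_poly i (n' - 2 * k)) \<in> pos_cone i (n + n')"
      unfolding e .
    show "0 \<le> g j * g' k" using g(1) g'(1) by simp
  qed
  finally show ?thesis .
qed

section \<open>The coefficient vector g^{(d,i)} and the theorem\<close>

lemma B_expansion_eq_expansion:
  assumes i: "0 < i" shows "B_expansion d i g = expansion i (Suc d) g"
  unfolding B_expansion_def expansion_def
proof (rule sum.cong)
  fix j assume "j \<in> {..Suc d div 2}"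
  hence "int d - 2 * int j = int (Suc d - 2 * j) - 1" by auto
  thus "smult (g j) (monom 1 j * P_poly (int d - 2 * int j) i) =
        smult (g j) (monom 1 j * basis_poly i (Suc d - 2 * j))"
    by (simp only: P_poly_eq_basis_poly[OF i])
qed simp

text \<open>By uniqueness of the expansion, g_vec reads off the expansion coefficients.\<close>

lemma g_vec_expansion:
  assumes i: "0 < i" and h: "h = expansion i (Suc d) g" and j: "j \<le> Suc d div 2"
  shows "g_vec d i h j = g j"
proof -
  define g0 where "g0 = (\<lambda>j. if j \<le> Suc d div 2 then g j else 0)"
  let ?P = "\<lambda>g. (\<forall>j > (d + 1) div 2. g j = 0) \<and> B_expansion d i g = h"
  have P: "?P g0"
    unfolding B_expansion_eq_expansion[OF i] h by (auto simp: g0_def intro!: expansion_cong)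
  have "g_vec d i h = g0"
    unfolding g_vec_def
  proof (rule the_equality[of ?P, OF P])
    fix g' assume g': "?P g'"
    show "g' = g0"
    proof
      fix j
      show "g' j = g0 j"
      proof (cases "j \<le> Suc d div 2")
        case True thus ?thesis
          using g' P expansion_inj unfolding B_expansion_eq_expansion[OF i] by metis
      qed (use g' P in auto)
    qed
  qed
  thus ?thesis using j by (simp add: g0_def)
qed

lemma palindromic_in_pos_cone:
  assumes i: "0 < i" and deg: "degree h \<le> m + 1" and pal: "palindromic m h"
    and nonneg: "\<forall>j \<le> (m + 1) div 2. g_vec m i h j \<ge> 0"
  shows "h \<in> pos_cone i (Suc m)"
proof -
  have "self_reciprocal (Suc m) h" using pal unfolding palindromic_def self_reciprocal_def Suc_eq_plus1 .
  hence "coeff_symmetric (Suc m) h" using deg by (intro self_reciprocal_imp_coeff_symmetric) simp_all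
  then obtain g where g: "h = expansion i (Suc m) g" using expansion_exists by blast
  define g0 where "g0 = (\<lambda>j. if j \<le> Suc m div 2 then g j else 0)"
  have "h = expansion i (Suc m) g0" unfolding g by (rule expansion_cong) (simp add: g0_def)
  moreover have "0 \<le> g0 j" for j using nonneg g_vec_expansion[OF i g] by (simp add: g0_def)
  ultimately show ?thesis using pos_coneI by metis
qed

theorem proposition4p1:
  fixes m m' i :: nat and h h' :: "rat poly"
  assumes "i > 0"
    and "degree h \<le> m + 1" and "palindromic m h"
    and "degree h' \<le> m' + 1" and "palindromic m' h'"
    and "\<forall>j \<le> (m + 1) div 2. g_vec m i h j \<ge> 0"
    and "\<forall>j \<le> (m' + 1) div 2. g_vec m' i h' j \<ge> 0"
  shows "\<forall>j \<le> (m + m' + 2) div 2. g_vec (m + m' + 1) i (h * h') j \<ge> 0"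
proof -
  have "h * h' \<in> pos_cone i (Suc m + Suc m')"
    using pos_cone_mult[OF assms(1) palindromic_in_pos_cone[OF assms(1,2,3,6)]
        palindromic_in_pos_cone[OF assms(1,4,5,7)]] .
  hence "h * h' \<in> pos_cone i (Suc (m + m' + 1))" by simp
  then obtain G where G: "\<And>j. 0 \<le> G j" "h * h' = expansion i (Suc (m + m' + 1)) G"
    by (meson pos_coneE)
  show ?thesis
    using g_vec_expansion[OF assms(1) G(2)] G(1) by simp
qed

end
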